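(* Let $\Lambda_0\subset\mathbb{R}^n$ be an $n$-dimensional lattice of density $\beta=e^{n\delta}$, used over an additive circularly-symmetric noise (ACSN) channel whose noise norm $\|z\|$ has density $f_{\|z\|}$. For $r>0$ define $$\alpha(r)=\inf_{\alpha'\in\mathcal{A}_{2r}}\ \sup_{0<x\le 2e^{\delta}r}\alpha'(x).$$ Then the error probability of the maximum-likelihood (nearest-lattice-point) decoder satisfies, for every $r>0$, $$P_e(\Lambda_0)\le \alpha(r)\,\beta V_n\int_0^{r}f_{\|z\|}(\rho)\rho^n\,d\rho+\int_r^\infty f_{\|z\|}(\rho)\,d\rho,$$ and hence $P_e(\Lambda_0)$ is at most the minimum over $r$ of the right-hand side.
   Context: An ACSN channel: the receiver observes $y=\lambda+z$, where $\lambda$ is the transmitted lattice point and $z\in\mathbb{R}^n$ is noise whose distribution is isotropic (invariant under orthogonal maps) with density a non-increasing function of $\|z\|$; $f_{\|z\|}$ is the density of $\|z\|$. The ML decoder errs when $z$ is not in the Voronoi cell $\{y:\|y\|<\|y-\lambda\|\ \forall\lambda\in\Lambda_0\setminus\{0\}\}$ of $0$; $P_e(\Lambda_0)$ is this probability. $V_n$ is the volume of the unit $n$-ball, $\beta=1/\det\Lambda_0$, $\delta=\frac1n\ln\beta$. The distance series $0<\lambda_1<\lambda_2<\cdots$ lists the distinct norms of nonzero lattice vectors, $\mathcal{N}_j=\#\{\lambda\in\Lambda_0:\|\lambda\|=\lambda_j\}$, and $\widetilde\lambda_j=e^{\delta}\lambda_j$. For $L>0$, $\mathcal{A}_L$ is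 the set of functions $\alpha'(x)=N'(x)/(nV_nx^{n-1})$ ($x>0$), where $N'\ge0$ is a locally integrable function on $(0,\infty)$ with $\sum_{j:\widetilde\lambda_j\le t}\mathcal{N}_j\le\int_0^tN'(x)\,dx$ for all $t\in(0,e^{\delta}L]$. (In the paper, $\alpha(r)=\max_{x\le 2e^{\delta}r}\alpha^{\mathrm{opt}}(x)$ with $\alpha^{\mathrm{opt}}$ a minimizer of this min–max problem.) *)

theory Defs
  imports "HOL-Probability.Probability"
begin

definition lattice_of :: "real^'n^'n \<Rightarrow> (real^'n) set" where
  "lattice_of B = range (\<lambda>k::int^'n. B *v (\<chi> i. real_of_int (k $ i)))"

definition voronoi0 :: "(real^'n) set \<Rightarrow> (real^'n) set" where
  "voronoi0 L = {y. \<forall>l\<in>L - {0}. norm y < norm (y - l)}"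

text \<open>Sum of N_j over the indices j of the distance series with e^delta * lambda_j <= t.
  The distance series is indexed by its (distinct) values rho = lambda_j,
  and N_j = card of the shell of norm rho.\<close>
definition shell_sum :: "(real^'n) set \<Rightarrow> real \<Rightarrow> real \<Rightarrow> real" where
  "shell_sum L \<delta> t =
     (\<Sum>\<rho>\<in>{\<rho>\<in>norm ` (L - {0}). exp \<delta> * \<rho> \<le> t}. real (card {l\<in>L. norm l = \<rho>}))"

definition A_set :: "(real^'n) set \<Rightarrow> real \<Rightarrow> real \<Rightarrow> (real \<Rightarrow> real) set" where
  "A_set L \<delta> Lr = {\<alpha>'. \<exists>N' :: real \<Rightarrow> real.
      (\<forall>x>0. 0 \<le> N' x) \<and>
      (\<forall>a b. 0 < a \<longrightarrow> a \<le> b \<longrightarrow> set_integrable lborel {a..b} N') \<and>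
      (\<forall>x>0. \<alpha>' x = N' x /
          (real CARD('n) * measure lborel (ball (0::real^'n) 1) * x ^ (CARD('n) - 1))) \<and>
      (\<forall>t\<in>{0<..exp \<delta> * Lr}.
          ennreal (shell_sum L \<delta> t) \<le> (\<integral>\<^sup>+ x\<in>{0<..t}. ennreal (N' x) \<partial>lborel))}"

definition alpha_fn :: "(real^'n) set \<Rightarrow> real \<Rightarrow> real \<Rightarrow> ennreal" where
  "alpha_fn L \<delta> r = (INF \<alpha>'\<in>A_set L \<delta> (2 * r). SUP x\<in>{0<..2 * exp \<delta> * r}. ennreal (\<alpha>' x))"

end

theory Submission
  imports Defs
begin

(* A received point z with norm z < r is decoded wrongly only if it lies in the error region
   D(l) = {z. norm (z - l) <= norm z, norm z < r} of some nonzero lattice point l, so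
   P_e <= sum_l P(D(l)) + P(norm z >= r).  For isotropic noise P(D(l)) depends only on norm l,
   decreases in it (D(l) is contained in D(s l) for 0 <= s <= 1) and vanishes for norm l >= 2r.
   Hence every superlevel set of l |-> P(D(l)) is a ball about 0, and the defining inequality of
   A_2r bounds the number of lattice points in it by alpha * beta times its volume.  Integrating
   over the levels (layer cake) gives sum_l P(D(l)) <= alpha * beta * integral P(D(u)) du, and by
   Fubini integral P(D(u)) du = V_n E[norm z ^ n; norm z < r], since z lies in D(u) iff u lies
   in the closed ball of radius norm z about z. *)

lemma orthogonal_transformation_borel_measurable:
  fixes H :: "'a::euclidean_space \<Rightarrow> 'a"
  assumes "orthogonal_transformation H"
  shows "H \<in> borel_measurable borel"
  using orthogonal_transformation_linear[OF assms]
  by (intro borel_measurable_continuous_onI linear_continuous_on) (simp add: linear_linear)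

lemma null_sets_lborel_orthogonal_image:
  fixes H :: "'a::euclidean_space \<Rightarrow> 'a"
  assumes H: "orthogonal_transformation H" and N: "N \<in> null_sets lborel"
  shows "H ` N \<in> null_sets lborel"
proof -
  have "negligible N"
    using N by (simp add: negligible_iff_null_sets null_sets_completionI)
  then have "negligible (H ` N)"
    using H by (intro negligible_differentiable_image_negligible linear_imp_differentiable_on)
      (auto simp: orthogonal_transformation_linear)
  moreover have "H ` N = inv H -` N"
    using orthogonal_transformation_bij[OF H] by (simp add: bij_vimage_eq_inv_image bij_imp_bij_inv inv_inv_eq)
  moreover have "inv H -` N \<in> sets borel"
    using measurable_sets_borel[OF orthogonal_transformation_borel_measurable[OF orthogonal_transformation_inv[OF H]]]
      null_setsD2[OF N] by simp
  ultimately show ?thesis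
    by (metis negligible_iff_null_sets null_sets_completion_iff sets_lborel)
qed

lemma open_disjoint_balls_cover:
  fixes U :: "'a::euclidean_space set"
  assumes U: "open U"
  obtains C :: "('a \<times> real) set"
  where "countable C" "\<And>i. i \<in> C \<Longrightarrow> 0 < snd i"
    "disjoint_family_on (\<lambda>i. ball (fst i) (snd i)) C"
    "(\<Union>i\<in>C. ball (fst i) (snd i)) \<subseteq> U"
    "U - (\<Union>i\<in>C. ball (fst i) (snd i)) \<in> null_sets lborel"
proof -
  define K where "K = {(x, \<rho>). 0 < \<rho> \<and> ball x \<rho> \<subseteq> U}"
  have "\<exists>i. i \<in> K \<and> x \<in> ball (fst i) (snd i) \<and> snd i < d" if "x \<in> U" "0 < d" for x d
  proof -
    obtain e where "e > 0" "ball x e \<subseteq> U"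
      using U \<open>x \<in> U\<close> open_contains_ball by blast
    then show ?thesis
      using \<open>0 < d\<close> by (intro exI[of _ "(x, min e (d/2))"]) (auto simp: K_def)
  qed
  then obtain C where C: "countable C" "C \<subseteq> K"
     and disj: "pairwise (\<lambda>i j. disjnt (ball (fst i) (snd i)) (ball (fst j) (snd j))) C"
     and null: "negligible (U - (\<Union>i \<in> C. ball (fst i) (snd i)))"
    using Vitali_covering_theorem_balls[of U K fst snd] by blast
  have "(\<Union>i \<in> C. ball (fst i) (snd i)) \<in> sets borel"
    using C(1) by (intro sets.countable_UN'') auto
  then have "U - (\<Union>i \<in> C. ball (fst i) (snd i)) \<in> null_sets lborel"
    using null U by (metis negligible_iff_null_sets null_sets_completion_iff sets.Diff sets_lborel borel_open)
  moreover have "disjoint_family_on (\<lambda>i. ball (fst i) (snd i)) C"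
    using disj by (auto simp: disjoint_family_on_def pairwise_def disjnt_def)
  ultimately show thesis
    using C by (intro that) (fastforce simp: K_def)+
qed

(* Change_Of_Vars.measure_orthogonal_image needs a well-ordered index type; here Vitali's
   covering theorem reduces the invariance to that of balls, in any euclidean_space. *)
lemma emeasure_lborel_orthogonal_image_open:
  fixes H :: "'a::euclidean_space \<Rightarrow> 'a"
  assumes H: "orthogonal_transformation H" and U: "open U"
  shows "emeasure lborel (H ` U) = emeasure lborel U"
proof -
  obtain C where C: "countable C" and pos: "\<And>i. i \<in> C \<Longrightarrow> 0 < snd i"
    and disj: "disjoint_family_on (\<lambda>i. ball (fst i) (snd i)) C"
    and BU: "(\<Union>i\<in>C. ball (fst i) (snd i)) \<subseteq> U"
    and N: "U - (\<Union>i\<in>C. ball (fst i) (snd i)) \<in> null_sets lborel"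
    using open_disjoint_balls_cover[OF U] by blast
  define B where "B = (\<Union>i \<in> C. ball (fst i) (snd i))"
  have Hball: "H ` ball x \<rho> = ball (H x) \<rho>" for x \<rho>
    using image_orthogonal_transformation_ball[OF H] by simp
  have "disjoint_family_on (\<lambda>i. ball (H (fst i)) (snd i)) C"
    using disj by (auto simp: disjoint_family_on_def
        image_Int[OF orthogonal_transformation_inj[OF H], symmetric] simp flip: Hball)
  then have "emeasure lborel (H ` B) = (\<integral>\<^sup>+i. emeasure lborel (ball (H (fst i)) (snd i)) \<partial>count_space C)"
    unfolding B_def image_UN Hball using C by (intro emeasure_UN_countable) auto
  also have "\<dots> = (\<integral>\<^sup>+i. emeasure lborel (ball (fst i) (snd i)) \<partial>count_space C)"
    using pos by (intro nn_integral_cong) (simp add: emeasure_ball less_imp_le)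
  also have "\<dots> = emeasure lborel B"
    unfolding B_def using C disj by (intro emeasure_UN_countable[symmetric]) auto
  finally have HB: "emeasure lborel (H ` B) = emeasure lborel B" .
  have "H ` B \<in> sets borel" "B \<in> sets borel"
    unfolding B_def image_UN Hball by (intro borel_open open_UN; simp)+
  then show ?thesis
    using emeasure_Un_null_set[of "H ` B" lborel "H ` (U - B)"] emeasure_Un_null_set[of B lborel "U - B"]
      null_sets_lborel_orthogonal_image[OF H N] N BU HB
    by (simp add: B_def image_Un[symmetric] Un_absorb1)
qed

lemma distr_lborel_orthogonal_transformation:
  fixes H :: "'a::euclidean_space \<Rightarrow> 'a"
  assumes H: "orthogonal_transformation H"
  shows "distr lborel borel H = lborel"
proof (rule lborel_eqI[symmetric])
  fix l u :: 'a assume "\<And>b. b \<in> Basis \<Longrightarrow> l \<bullet> b \<le> u \<bullet> b"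
  then have "emeasure lborel (box l u) = (\<Prod>b\<in>Basis. (u - l) \<bullet> b)"
    by (simp add: emeasure_lborel_box_eq)
  moreover have "H -` box l u = inv H ` box l u"
    using orthogonal_transformation_bij[OF H] by (simp add: bij_vimage_eq_inv_image)
  ultimately show "emeasure (distr lborel borel H) (box l u) = (\<Prod>b\<in>Basis. (u - l) \<bullet> b)"
    using emeasure_lborel_orthogonal_image_open[OF orthogonal_transformation_inv[OF H], of "box l u"]
      orthogonal_transformation_borel_measurable[OF H]
    by (simp add: emeasure_distr open_box)
qed simp

lemma nn_integral_lborel_orthogonal_transformation:
  fixes H :: "'a::euclidean_space \<Rightarrow> 'a"
  assumes H: "orthogonal_transformation H" and f: "f \<in> borel_measurable borel"
  shows "(\<integral>\<^sup>+x. f (H x) \<partial>lborel) = (\<integral>\<^sup>+x. f x \<partial>lborel)"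
  using nn_integral_distr[of H lborel borel f] f orthogonal_transformation_borel_measurable[OF H]
  by (simp add: distr_lborel_orthogonal_transformation[OF H])

lemma emeasure_lborel_ball_eq:
  fixes c :: "'a::euclidean_space"
  assumes "0 \<le> \<rho>"
  shows "emeasure lborel (ball c \<rho>) = ennreal (\<rho> ^ DIM('a) * measure lborel (ball (0::'a) 1))"
    and "emeasure lborel (cball c \<rho>) = ennreal (\<rho> ^ DIM('a) * measure lborel (ball (0::'a) 1))"
  using emeasure_ball[OF assms, of c] emeasure_cball[OF assms, of c] content_ball[of 1 "0::'a"]
  by (simp_all add: mult.commute)

lemma finite_int_vectors_bounded: "finite {k::int^'n. \<forall>i. \<bar>k $ i\<bar> \<le> m}"
proof -
  have "{k::int^'n. \<forall>i. \<bar>k $ i\<bar> \<le> m} \<subseteq> vec_lambda ` PiE UNIV (\<lambda>_. {-m..m})"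
  proof
    fix k :: "int^'n" assume k: "k \<in> {k. \<forall>i. \<bar>k $ i\<bar> \<le> m}"
    have "k $ i \<in> {-m..m}" for i
      using k abs_le_iff[of "k $ i" m] by auto
    then have "vec_nth k \<in> PiE UNIV (\<lambda>_. {-m..m})" by auto
    then show "k \<in> vec_lambda ` PiE UNIV (\<lambda>_. {-m..m})"
      by (metis image_eqI vec_nth_inverse)
  qed
  then show ?thesis
    by (rule finite_subset) (intro finite_imageI finite_PiE, auto)
qed

lemma finite_lattice_points_norm_le:
  fixes B :: "real^'n^'n"
  assumes "det B \<noteq> 0"
  shows "finite {l \<in> lattice_of B. norm l \<le> R}"
proof -
  obtain Bi where Bi: "Bi ** B = mat 1"
    using assms invertible_det_nz[of B] unfolding invertible_def by blast
  obtain K where K: "K > 0" "\<And>x. norm (Bi *v x) \<le> norm x * K"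
    using bounded_linear.pos_bounded[OF matrix_vector_mul_bounded_linear[of Bi]] by blast
  define kv where "kv k = (\<chi> i. real_of_int (k $ i))" for k :: "int^'n"
  have "{l \<in> lattice_of B. norm l \<le> R} \<subseteq> (\<lambda>k. B *v kv k) ` {k. \<forall>i. \<bar>k $ i\<bar> \<le> \<lceil>R * K\<rceil>}"
  proof
    fix l assume l: "l \<in> {l \<in> lattice_of B. norm l \<le> R}"
    then obtain k where k: "l = B *v kv k" by (auto simp: lattice_of_def kv_def)
    have "norm (kv k) \<le> R * K"
      using K(2)[of l] l K(1) Bi
      by (simp add: k matrix_vector_mul_assoc) (meson mult_right_mono order_trans less_imp_le)
    then have "\<bar>k $ i\<bar> \<le> \<lceil>R * K\<rceil>" for i
      using component_le_norm_cart[of "kv k" i] by (simp add: kv_def) linarith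
    then show "l \<in> (\<lambda>k. B *v kv k) ` {k. \<forall>i. \<bar>k $ i\<bar> \<le> \<lceil>R * K\<rceil>}"
      using k by blast
  qed
  then show ?thesis
    using finite_int_vectors_bounded finite_subset by blast
qed

lemma countable_lattice_of:
  fixes B :: "real^'n^'n"
  assumes "det B \<noteq> 0"
  shows "countable (lattice_of B)"
proof -
  have "lattice_of B = (\<Union>N::nat. {l \<in> lattice_of B. norm l \<le> real N})"
    by (auto intro: real_arch_simple)
  also have "countable \<dots>"
    by (rule countable_UN) (auto intro: countable_finite finite_lattice_points_norm_le[OF assms])
  finally show ?thesis .
qed

(* Ties count as errors, matching the strict inequality in voronoi0. *)
definition error_region :: "real \<Rightarrow> 'a::real_normed_vector \<Rightarrow> 'a set" where
  "error_region r l = {z. norm (z - l) \<le> norm z \<and> norm z < r}"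

definition radial_density :: "(real \<Rightarrow> real) \<Rightarrow> 'a::euclidean_space measure" where
  "radial_density g = density lborel (\<lambda>z. ennreal (g (norm z)))"

lemma sets_radial_density [simp, measurable_cong]: "sets (radial_density g) = sets borel"
  by (simp add: radial_density_def)

lemma space_radial_density [simp]: "space (radial_density g) = UNIV"
  by (simp add: radial_density_def)

lemma error_region_borel [measurable]: "error_region r (l::'a::euclidean_space) \<in> sets borel"
  unfolding error_region_def by measurable

lemma norm_diff_le_norm_iff:
  fixes z w :: "'a::real_inner"
  shows "norm (z - w) \<le> norm z \<longleftrightarrow> w \<bullet> w \<le> 2 * (z \<bullet> w)"
proof -
  have "(z - w) \<bullet> (z - w) = z \<bullet> z - 2 * (z \<bullet> w) + w \<bullet> w"
    by (simp add: inner_diff_left inner_diff_right inner_commute)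
  then show ?thesis
    unfolding norm_le by linarith
qed

lemma error_region_subset_scaleR:
  fixes l :: "'a::real_inner"
  assumes "0 \<le> s" "s \<le> 1"
  shows "error_region r l \<subseteq> error_region r (s *\<^sub>R l)"
proof
  fix z assume z: "z \<in> error_region r l"
  have "s * s \<le> s"
    using assms by (simp add: mult_left_le_one_le)
  then have "s * s * (l \<bullet> l) \<le> s * (l \<bullet> l)"
    by (rule mult_right_mono) simp
  also have "\<dots> \<le> s * (2 * (z \<bullet> l))"
    using z assms norm_diff_le_norm_iff[of z l] by (simp add: error_region_def mult_left_mono)
  finally show "z \<in> error_region r (s *\<^sub>R l)"
    using z norm_diff_le_norm_iff[of z "s *\<^sub>R l"] by (simp add: error_region_def algebra_simps)
qed

lemma error_region_eq_empty:
  fixes l :: "'a::real_normed_vector"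
  assumes "2 * r \<le> norm l"
  shows "error_region r l = {}"
proof -
  have False if "z \<in> error_region r l" for z
    using that assms norm_triangle_ineq4[of z "z - l"] by (simp add: error_region_def)
  then show ?thesis by blast
qed

lemma vimage_error_region_orthogonal:
  fixes H :: "'a::euclidean_space \<Rightarrow> 'a"
  assumes "orthogonal_transformation H"
  shows "H -` error_region r (H v) = error_region r v"
  using assms by (auto simp: error_region_def orthogonal_transformation_norm
      linear_diff[OF orthogonal_transformation_linear[OF assms], symmetric])

lemma emeasure_radial_density_vimage_orthogonal:
  fixes H :: "'a::euclidean_space \<Rightarrow> 'a"
  assumes H: "orthogonal_transformation H" and [measurable]: "g \<in> borel_measurable borel"
    and A[measurable]: "A \<in> sets borel"
  shows "emeasure (radial_density g) (H -` A) = emeasure (radial_density g) A"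
proof -
  note [measurable] = orthogonal_transformation_borel_measurable[OF H]
  have "H -` A \<in> sets borel"
    by (rule measurable_sets_borel[OF orthogonal_transformation_borel_measurable[OF H] A])
  then have "emeasure (radial_density g) (H -` A)
      = (\<integral>\<^sup>+z. (\<lambda>w. ennreal (g (norm w)) * indicator A w) (H z) \<partial>lborel)"
    by (simp add: radial_density_def emeasure_density orthogonal_transformation_norm[OF H]
        indicator_def)
  also have "\<dots> = emeasure (radial_density g) A"
    by (subst nn_integral_lborel_orthogonal_transformation[OF H]) (simp_all add: radial_density_def emeasure_density)
  finally show ?thesis .
qed

lemma measure_error_region_norm_eq:
  fixes u v :: "real^'n"
  assumes "g \<in> borel_measurable borel" and "norm u = norm v"
  shows "measure (radial_density g) (error_region r u) = measure (radial_density g) (error_region r v)"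
proof -
  obtain H where H: "orthogonal_transformation H" "H v = u"
    using orthogonal_transformation_exists[OF assms(2)[symmetric]] by blast
  then show ?thesis
    using emeasure_radial_density_vimage_orthogonal[OF H(1) assms(1) error_region_borel, of r u]
      vimage_error_region_orthogonal[OF H(1), of r v]
    by (simp add: measure_def)
qed

lemma measure_error_region_antimono:
  fixes u l :: "real^'n"
  assumes "finite_measure (radial_density g :: (real^'n) measure)"
    and "g \<in> borel_measurable borel" and "norm u \<le> norm l"
  shows "measure (radial_density g) (error_region r l) \<le> measure (radial_density g) (error_region r u)"
proof (cases "l = 0")
  case True
  then show ?thesis using assms(3) by simp
next
  case False
  define s where "s = norm u / norm l"
  have s: "0 \<le> s" "s \<le> 1"
    using False assms(3) by (auto simp: s_def)
  have "measure (radial_density g) (error_region r l) \<le> measure (radial_density g) (error_region r (s *\<^sub>R l))"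
    using finite_measure.finite_measure_mono[OF assms(1) error_region_subset_scaleR[OF s, of r l]] by simp
  also have "\<dots> = measure (radial_density g) (error_region r u)"
    using False by (intro measure_error_region_norm_eq assms(2)) (simp add: s_def)
  finally show ?thesis .
qed

lemma borel_measurable_pair_error_region:
  assumes [measurable]: "g \<in> borel_measurable borel"
  shows "(\<lambda>(l::'a::euclidean_space, z). ennreal (g (norm z)) * indicator (error_region r l) z)
           \<in> borel_measurable (lborel \<Otimes>\<^sub>M lborel)"
proof -
  have "(\<lambda>(l::'a, z). ennreal (g (norm z)) * indicator (error_region r l) z)
      = (\<lambda>p. ennreal (g (norm (snd p))) * indicator {p. norm (snd p - fst p) \<le> norm (snd p) \<and> norm (snd p) < r} p)"
    by (auto simp: error_region_def indicator_def fun_eq_iff)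
  also have "\<dots> \<in> borel_measurable (lborel \<Otimes>\<^sub>M lborel)"
    by measurable
  finally show ?thesis .
qed

lemma emeasure_error_region_eq_nn_integral:
  assumes "g \<in> borel_measurable borel"
  shows "emeasure (radial_density g) (error_region r l)
           = (\<integral>\<^sup>+z. ennreal (g (norm z)) * indicator (error_region r l) z \<partial>lborel)"
  using assms by (simp add: radial_density_def emeasure_density)

lemma borel_measurable_measure_error_region:
  assumes "g \<in> borel_measurable borel"
  shows "(\<lambda>l::'a::euclidean_space. measure (radial_density g) (error_region r l)) \<in> borel_measurable borel"
proof -
  have "(\<lambda>l::'a. emeasure (radial_density g) (error_region r l)) \<in> borel_measurable lborel"
    using lborel.borel_measurable_nn_integral[OF borel_measurable_pair_error_region[OF assms]]
    by (simp add: emeasure_error_region_eq_nn_integral[OF assms])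
  then show ?thesis
    unfolding measure_def by (simp cong: measurable_cong_sets)
qed

lemma nn_integral_emeasure_error_region:
  assumes [measurable]: "g \<in> borel_measurable borel"
  shows "(\<integral>\<^sup>+(l::'a::euclidean_space). emeasure (radial_density g) (error_region r l) \<partial>lborel)
           = ennreal (measure lborel (ball (0::'a) 1))
             * (\<integral>\<^sup>+z. ennreal (norm z ^ DIM('a)) * indicator {z. norm z < r} z \<partial>(radial_density g :: 'a measure))"
proof -
  define V where "V = measure lborel (ball (0::'a) 1)"
  have inner: "(\<integral>\<^sup>+l. ennreal (g (norm z)) * indicator (error_region r l) z \<partial>lborel)
      = ennreal V * (ennreal (g (norm z)) * (ennreal (norm z ^ DIM('a)) * indicator {z. norm z < r} z))"
    for z :: 'a
  proof -
    have "ennreal (g (norm z)) * indicator (error_region r l) z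
        = ennreal (g (norm z)) * indicator {z. norm z < r} z * indicator (cball z (norm z)) l" for l
      by (auto simp: error_region_def indicator_def dist_norm)
    then have "(\<integral>\<^sup>+l. ennreal (g (norm z)) * indicator (error_region r l) z \<partial>lborel)
        = ennreal (g (norm z)) * indicator {z. norm z < r} z * emeasure lborel (cball z (norm z))"
      by (simp add: nn_integral_cmult_indicator)
    then show ?thesis
      by (simp add: emeasure_lborel_ball_eq(2) V_def ennreal_mult' mult_ac)
  qed
  have "(\<integral>\<^sup>+(l::'a). emeasure (radial_density g) (error_region r l) \<partial>lborel)
      = (\<integral>\<^sup>+l. \<integral>\<^sup>+z. ennreal (g (norm (z::'a))) * indicator (error_region r l) z \<partial>lborel \<partial>lborel)"
    by (simp add: emeasure_error_region_eq_nn_integral)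
  also have "\<dots> = (\<integral>\<^sup>+z. \<integral>\<^sup>+l. ennreal (g (norm (z::'a))) * indicator (error_region r l) z
                           \<partial>lborel \<partial>lborel)"
    by (rule lborel_pair.Fubini'[OF borel_measurable_pair_error_region[OF assms], symmetric])
  also have "\<dots> = ennreal V * (\<integral>\<^sup>+z. ennreal (g (norm (z::'a)))
                    * (ennreal (norm z ^ DIM('a)) * indicator {z. norm z < r} z) \<partial>lborel)"
    by (simp add: inner nn_integral_cmult)
  also have "\<dots> = ennreal V * (\<integral>\<^sup>+z. ennreal (norm z ^ DIM('a)) * indicator {z. norm z < r} z
                                 \<partial>(radial_density g :: 'a measure))"
    by (simp add: radial_density_def nn_integral_density)
  finally show ?thesis
    by (simp add: V_def)
qed

lemma emeasure_UN_countable_le: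
  assumes I: "countable I" and X: "\<And>i. i \<in> I \<Longrightarrow> X i \<in> sets M"
  shows "emeasure M (\<Union>i\<in>I. X i) \<le> (\<integral>\<^sup>+i. emeasure M (X i) \<partial>count_space I)"
proof -
  have ind: "indicator (\<Union>i\<in>I. X i) x \<le> (\<integral>\<^sup>+i. indicator (X i) x \<partial>count_space I)" for x
  proof (cases "x \<in> (\<Union>i\<in>I. X i)")
    case True
    then obtain j where j: "j \<in> I" "x \<in> X j" by blast
    have "(1::ennreal) = (\<integral>\<^sup>+i. indicator (X i) x * indicator {j} i \<partial>count_space I)"
      using j by simp
    also have "\<dots> \<le> (\<integral>\<^sup>+i. indicator (X i) x \<partial>count_space I)"
      by (intro nn_integral_mono) (simp add: indicator_def)
    finally show ?thesis using True by simp
  qed simp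
  have "emeasure M (\<Union>i\<in>I. X i) = (\<integral>\<^sup>+x. indicator (\<Union>i\<in>I. X i) x \<partial>M)"
    using I X by (intro nn_integral_indicator[symmetric] sets.countable_UN'') auto
  also have "\<dots> \<le> (\<integral>\<^sup>+x. \<integral>\<^sup>+i. indicator (X i) x \<partial>count_space I \<partial>M)"
    by (intro nn_integral_mono ind)
  also have "\<dots> = (\<integral>\<^sup>+i. emeasure M (X i) \<partial>count_space I)"
    using I X by (subst nn_integral_count_space_nn_integral) (auto intro!: nn_integral_cong)
  finally show ?thesis .
qed

lemma nn_integral_count_space_le_superlevel:
  fixes \<phi> :: "'a \<Rightarrow> real"
  assumes M: "sigma_finite_measure M" and L: "countable L"
    and [measurable]: "\<phi> \<in> borel_measurable M"
    and bound: "\<And>t. 0 \<le> t \<Longrightarrow>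
      emeasure (count_space L) {l\<in>L. t < \<phi> l} \<le> C * emeasure M {u\<in>space M. t < \<phi> u}"
  shows "(\<integral>\<^sup>+l. ennreal (\<phi> l) \<partial>count_space L) \<le> C * (\<integral>\<^sup>+u. ennreal (\<phi> u) \<partial>M)"
proof -
  interpret pair_sigma_finite M lborel
    using M by (simp add: pair_sigma_finite_def lborel.sigma_finite_measure_axioms)
  have layer: "ennreal (\<phi> x) = (\<integral>\<^sup>+t. indicator {0..<\<phi> x} t \<partial>lborel)" for x
    by (cases "0 \<le> \<phi> x") (simp_all add: ennreal_neg)
  have "(\<lambda>(u, t). indicator {0..<\<phi> u} t :: ennreal) = indicator {p. 0 \<le> snd p \<and> snd p < \<phi> (fst p)}"
    by (auto simp: indicator_def fun_eq_iff)
  then have [measurable]: "(\<lambda>(u, t). indicator {0..<\<phi> u} t :: ennreal) \<in> borel_measurable (M \<Otimes>\<^sub>M lborel)"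
    by simp
  have slice: "(\<integral>\<^sup>+l. indicator {0..<\<phi> l} t \<partial>count_space L)
      \<le> C * (\<integral>\<^sup>+u. indicator {0..<\<phi> u} t \<partial>M)" for t :: real
  proof (cases "0 \<le> t")
    case True
    have "(\<integral>\<^sup>+l. indicator {0..<\<phi> l} t \<partial>count_space L)
        = (\<integral>\<^sup>+l. indicator {l\<in>L. t < \<phi> l} l \<partial>count_space L)"
      using True by (intro nn_integral_cong) (auto simp: indicator_def)
    also have "\<dots> = emeasure (count_space L) {l\<in>L. t < \<phi> l}"
      by (rule nn_integral_indicator) auto
    also have "\<dots> \<le> C * emeasure M {u\<in>space M. t < \<phi> u}"
      using bound[OF True] .
    also have "emeasure M {u\<in>space M. t < \<phi> u} = (\<integral>\<^sup>+u. indicator {u\<in>space M. t < \<phi> u} u \<partial>M)"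
      by (rule nn_integral_indicator[symmetric]) measurable
    also have "\<dots> = (\<integral>\<^sup>+u. indicator {0..<\<phi> u} t \<partial>M)"
      using True by (intro nn_integral_cong) (auto simp: indicator_def)
    finally show ?thesis .
  qed simp
  have "(\<integral>\<^sup>+l. ennreal (\<phi> l) \<partial>count_space L)
      = (\<integral>\<^sup>+t. \<integral>\<^sup>+l. indicator {0..<\<phi> l} t \<partial>count_space L \<partial>lborel)"
    using L by (subst layer, rule nn_integral_count_space_nn_integral[symmetric]) auto
  also have "\<dots> \<le> (\<integral>\<^sup>+t. C * \<integral>\<^sup>+u. indicator {0..<\<phi> u} t \<partial>M \<partial>lborel)"
    by (intro nn_integral_mono slice)
  also have "\<dots> = C * (\<integral>\<^sup>+t. \<integral>\<^sup>+u. indicator {0..<\<phi> u} t \<partial>M \<partial>lborel)"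
    by (rule nn_integral_cmult) measurable
  also have "(\<integral>\<^sup>+t. \<integral>\<^sup>+u. indicator {0..<\<phi> u} t \<partial>M \<partial>lborel) = (\<integral>\<^sup>+u. ennreal (\<phi> u) \<partial>M)"
    by (subst Fubini') (simp_all add: layer)
  finally show ?thesis .
qed

(* The hypothesis for k = 0 is needed because top * 0 = 0 and the infimum over I = {} is top. *)
lemma ennreal_le_INF_mult:
  fixes x k :: ennreal
  assumes le: "\<And>i. i \<in> I \<Longrightarrow> x \<le> f i * k" and fin: "k \<noteq> \<top>" and zero: "k = 0 \<Longrightarrow> x = 0"
  shows "x \<le> (INF i\<in>I. f i) * k"
proof (cases "k = 0 \<or> (INF i\<in>I. f i) = \<top>")
  case True
  then show ?thesis using zero by (auto simp: ennreal_top_mult)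
next
  case False
  then obtain K where K: "k = ennreal K" "0 < K"
    using fin by (cases k) (auto simp: ennreal_eq_0_iff)
  show ?thesis
  proof (rule ennreal_le_epsilon)
    fix e :: real assume "0 < e"
    then obtain i where i: "i \<in> I" "f i < (INF i\<in>I. f i) + ennreal (e / K)"
      using INF_approx_ennreal[of "e / K" "INF i\<in>I. f i" f I] False K by auto
    have "x \<le> f i * k" using le[OF i(1)] .
    also have "\<dots> \<le> ((INF i\<in>I. f i) + ennreal (e / K)) * k"
      using i(2) by (intro mult_right_mono) auto
    also have "\<dots> = (INF i\<in>I. f i) * k + ennreal e"
      using K \<open>0 < e\<close> by (simp add: distrib_right ennreal_mult[symmetric])
    finally show "x \<le> (INF i\<in>I. f i) * k + ennreal e" .
  qed
qed

lemma card_lattice_points_eq_shell_sum: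
  fixes L :: "(real^'n) set"
  assumes "finite {l\<in>L - {0}. norm l \<le> c}"
  shows "real (card {l\<in>L - {0}. norm l \<le> c}) = shell_sum L \<delta> (exp \<delta> * c)"
proof -
  define A where "A = {l\<in>L - {0}. norm l \<le> c}"
  have shells: "{\<rho>\<in>norm ` (L - {0}). exp \<delta> * \<rho> \<le> exp \<delta> * c} = norm ` A"
    by (auto simp: A_def)
  have "real (card A) = (\<Sum>\<rho>\<in>norm ` A. \<Sum>x\<in>{l\<in>A. norm l = \<rho>}. 1)"
    using sum.image_gen[OF assms[folded A_def], of "\<lambda>_. 1::real" norm] by simp
  also have "\<dots> = (\<Sum>\<rho>\<in>norm ` A. real (card {l\<in>L. norm l = \<rho>}))"
    by (intro sum.cong refl) (auto simp: A_def intro!: arg_cong[where f=card])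
  finally show ?thesis
    unfolding shell_sum_def shells A_def[symmetric] .
qed

lemma nn_integral_Icc_deriv_power:
  assumes "0 < n" "0 \<le> V" "0 \<le> T"
  shows "(\<integral>\<^sup>+x\<in>{0..T}. ennreal (real n * V * x ^ (n - 1)) \<partial>lborel) = ennreal (V * T ^ n)"
proof -
  have "(\<integral>\<^sup>+x\<in>{0..T}. ennreal (real n * V * x ^ (n - 1)) \<partial>lborel) = ennreal (V * T ^ n - V * 0 ^ n)"
    using assms by (intro nn_integral_FTC_Icc) (auto intro!: derivative_eq_intros simp: algebra_simps)
  then show ?thesis
    using assms by (simp add: power_0_left)
qed

lemma shell_sum_le_A_set:
  fixes L :: "(real^'n) set"
  assumes \<alpha>': "\<alpha>' \<in> A_set L \<delta> R" and T: "0 < T" "T \<le> exp \<delta> * R"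
  shows "ennreal (shell_sum L \<delta> T)
           \<le> (SUP x\<in>{0<..exp \<delta> * R}. ennreal (\<alpha>' x))
               * ennreal (measure lborel (ball (0::real^'n) 1) * T ^ CARD('n))"
proof -
  define n where "n = CARD('n)"
  define V where "V = measure lborel (ball (0::real^'n) 1)"
  define S where "S = (SUP x\<in>{0<..exp \<delta> * R}. ennreal (\<alpha>' x))"
  have n: "n > 0" by (simp add: n_def)
  have V: "V > 0" unfolding V_def by simp
  obtain N' where N'_nonneg: "\<forall>x>0. 0 \<le> N' x"
    and N'_\<alpha>': "\<forall>x>0. \<alpha>' x = N' x / (real n * V * x ^ (n - 1))"
    and N'_shell: "\<forall>t\<in>{0<..exp \<delta> * R}.
                     ennreal (shell_sum L \<delta> t) \<le> (\<integral>\<^sup>+x\<in>{0<..t}. ennreal (N' x) \<partial>lborel)"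
    using \<alpha>' unfolding A_set_def n_def V_def by blast
  have N'_le: "ennreal (N' x) * indicator {0<..T} x \<le> S * (ennreal (real n * V * x ^ (n - 1)) * indicator {0..T} x)"
    for x
  proof (cases "x \<in> {0<..T}")
    case True
    have "ennreal (\<alpha>' x) \<le> S"
      unfolding S_def using True T by (intro SUP_upper) auto
    moreover have "ennreal (N' x) = ennreal (\<alpha>' x) * ennreal (real n * V * x ^ (n - 1))"
      using True N'_nonneg N'_\<alpha>' V n by (simp add: ennreal_mult[symmetric])
    ultimately show ?thesis
      using True by (simp add: mult_right_mono)
  qed simp
  have "ennreal (shell_sum L \<delta> T) \<le> (\<integral>\<^sup>+x\<in>{0<..T}. ennreal (N' x) \<partial>lborel)"
    using N'_shell T by auto
  also have "\<dots> \<le> (\<integral>\<^sup>+x. S * (ennreal (real n * V * x ^ (n - 1)) * indicator {0..T} x) \<partial>lborel)"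
    by (intro nn_integral_mono N'_le)
  also have "\<dots> = S * ennreal (V * T ^ n)"
    using nn_integral_Icc_deriv_power[OF n less_imp_le[OF V] less_imp_le[OF T(1)]]
    by (subst nn_integral_cmult) auto
  finally show ?thesis
    by (simp add: S_def V_def n_def)
qed

lemma card_lattice_points_le_ball:
  fixes B :: "real^'n^'n"
  assumes det: "det B \<noteq> 0" and \<alpha>': "\<alpha>' \<in> A_set (lattice_of B) \<delta> R"
    and \<delta>: "\<delta> = ln (1 / \<bar>det B\<bar>) / real CARD('n)" and c: "0 < c" "c \<le> R"
  shows "of_nat (card {l \<in> lattice_of B - {0}. norm l \<le> c})
           \<le> (SUP x\<in>{0<..exp \<delta> * R}. ennreal (\<alpha>' x)) * ennreal (1 / \<bar>det B\<bar>)
               * emeasure lborel (ball (0::real^'n) c)"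
proof -
  define V where "V = measure lborel (ball (0::real^'n) 1)"
  have "exp \<delta> ^ CARD('n) = 1 / \<bar>det B\<bar>"
    using det by (simp add: \<delta> exp_of_nat_mult[symmetric])
  then have volume: "V * (exp \<delta> * c) ^ CARD('n) = 1 / \<bar>det B\<bar> * (c ^ CARD('n) * V)"
    by (simp add: power_mult_distrib)
  have finite: "finite {l \<in> lattice_of B - {0}. norm l \<le> c}"
    by (rule finite_subset[OF _ finite_lattice_points_norm_le[OF det, of c]]) auto
  have "of_nat (card {l \<in> lattice_of B - {0}. norm l \<le> c}) = ennreal (shell_sum (lattice_of B) \<delta> (exp \<delta> * c))"
    using card_lattice_points_eq_shell_sum[OF finite, of \<delta>] by (simp add: ennreal_of_nat_eq_real_of_nat)
  also have "\<dots> \<le> (SUP x\<in>{0<..exp \<delta> * R}. ennreal (\<alpha>' x)) * ennreal (1 / \<bar>det B\<bar> * (c ^ CARD('n) * V))"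
    using shell_sum_le_A_set[OF \<alpha>', of "exp \<delta> * c"] c unfolding V_def[symmetric] volume by simp
  also have "ennreal (1 / \<bar>det B\<bar> * (c ^ CARD('n) * V)) = ennreal (1 / \<bar>det B\<bar>) * ennreal (c ^ CARD('n) * V)"
    using c by (intro ennreal_mult) (auto simp: V_def)
  also have "ennreal (c ^ CARD('n) * V) = emeasure lborel (ball (0::real^'n) c)"
    using c by (simp add: emeasure_lborel_ball_eq V_def)
  finally show ?thesis
    by (simp add: mult.assoc)
qed

lemma lattice_superlevel_count_le:
  fixes B :: "real^'n^'n" and \<phi> :: "real^'n \<Rightarrow> real"
  assumes det: "det B \<noteq> 0" and \<alpha>': "\<alpha>' \<in> A_set (lattice_of B) \<delta> L"
    and \<delta>: "\<delta> = ln (1 / \<bar>det B\<bar>) / real CARD('n)"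
    and [measurable]: "\<phi> \<in> borel_measurable borel"
    and antimono: "\<And>u l. norm u \<le> norm l \<Longrightarrow> \<phi> l \<le> \<phi> u"
    and vanish: "\<And>l. L \<le> norm l \<Longrightarrow> \<phi> l \<le> 0"
    and t: "0 \<le> t"
  shows "emeasure (count_space (lattice_of B - {0})) {l \<in> lattice_of B - {0}. t < \<phi> l}
           \<le> (SUP x\<in>{0<..exp \<delta> * L}. ennreal (\<alpha>' x)) * ennreal (1 / \<bar>det B\<bar>)
               * emeasure lborel {u. t < \<phi> u}"
proof (cases "{l \<in> lattice_of B - {0}. t < \<phi> l} = {}")
  case True
  then show ?thesis by (metis emeasure_empty zero_le)
next
  case False
  define Lt where "Lt = {l \<in> lattice_of B - {0}. t < \<phi> l}"
  have short: "norm l < L" if "l \<in> Lt" for l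
    using that t vanish[of l] by (force simp: Lt_def)
  have "finite Lt"
    using short by (intro finite_subset[OF _ finite_lattice_points_norm_le[OF det, of L]])
      (auto simp: Lt_def less_imp_le)
  define c where "c = Max (norm ` Lt)"
  have "c \<in> norm ` Lt"
    unfolding c_def using \<open>finite Lt\<close> False by (intro Max_in) (auto simp: Lt_def)
  then obtain l0 where l0: "l0 \<in> Lt" "norm l0 = c"
    by blast
  have c: "0 < c" "c \<le> L"
    using l0 short[OF l0(1)] by (auto simp: Lt_def)
  have ball_superlevel: "ball 0 c \<subseteq> {u. t < \<phi> u}"
  proof
    fix u :: "real^'n" assume "u \<in> ball 0 c"
    then have "\<phi> l0 \<le> \<phi> u" using antimono l0(2) by simp
    then show "u \<in> {u. t < \<phi> u}" using l0(1) by (simp add: Lt_def)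
  qed
  have "Lt \<subseteq> {l \<in> lattice_of B - {0}. norm l \<le> c}"
    using \<open>finite Lt\<close> by (auto simp: c_def Lt_def)
  moreover have "finite {l \<in> lattice_of B - {0}. norm l \<le> c}"
    by (rule finite_subset[OF _ finite_lattice_points_norm_le[OF det, of c]]) auto
  ultimately have "emeasure (count_space (lattice_of B - {0})) Lt \<le> of_nat (card {l \<in> lattice_of B - {0}. norm l \<le> c})"
    using \<open>finite Lt\<close> by (subst emeasure_count_space_finite) (auto simp: Lt_def intro!: card_mono)
  also have "\<dots> \<le> (SUP x\<in>{0<..exp \<delta> * L}. ennreal (\<alpha>' x)) * ennreal (1 / \<bar>det B\<bar>)
               * emeasure lborel (ball (0::real^'n) c)"
    by (rule card_lattice_points_le_ball[OF det \<alpha>' \<delta> c])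
  also have "emeasure lborel (ball (0::real^'n) c) \<le> emeasure lborel {u. t < \<phi> u}"
    by (rule emeasure_mono[OF ball_superlevel]) measurable
  finally show ?thesis
    by (simp add: Lt_def mult_left_mono)
qed

lemma emeasure_error_regions_le:
  fixes B :: "real^'n^'n" and g :: "real \<Rightarrow> real" and \<alpha>' :: "real \<Rightarrow> real"
  defines "M \<equiv> radial_density g :: (real^'n) measure"
  assumes det: "det B \<noteq> 0" and [measurable]: "g \<in> borel_measurable borel" and "prob_space M"
    and \<alpha>': "\<alpha>' \<in> A_set (lattice_of B) \<delta> (2 * r)"
    and \<delta>: "\<delta> = ln (1 / \<bar>det B\<bar>) / real CARD('n)"
  shows "emeasure M (\<Union>l\<in>lattice_of B - {0}. error_region r l)
           \<le> (SUP x\<in>{0<..2 * exp \<delta> * r}. ennreal (\<alpha>' x))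
               * (ennreal (1 / \<bar>det B\<bar>) * ennreal (measure lborel (ball (0::real^'n) 1))
                  * (\<integral>\<^sup>+z. ennreal (norm z ^ CARD('n)) * indicator {z. norm z < r} z \<partial>M))"
proof -
  interpret M: prob_space M by fact
  have sets_M [measurable_cong]: "sets M = sets borel"
    by (simp add: M_def)
  define \<phi> where "\<phi> l = measure M (error_region r l)" for l
  have [measurable]: "\<phi> \<in> borel_measurable borel"
    unfolding \<phi>_def[abs_def] M_def by (rule borel_measurable_measure_error_region) measurable
  have \<phi>_antimono: "\<phi> l \<le> \<phi> u" if "norm u \<le> norm l" for u l
    using measure_error_region_antimono[OF M.finite_measure_axioms[unfolded M_def] _ that]
    by (simp add: \<phi>_def M_def)
  have \<phi>_vanish: "\<phi> l \<le> 0" if "2 * r \<le> norm l" for l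
    using error_region_eq_empty[OF that] by (simp add: \<phi>_def)
  have countable: "countable (lattice_of B - {0})"
    using countable_lattice_of[OF det] by simp
  have "emeasure M (\<Union>l\<in>lattice_of B - {0}. error_region r l)
      \<le> (\<integral>\<^sup>+l. ennreal (\<phi> l) \<partial>count_space (lattice_of B - {0}))"
    using emeasure_UN_countable_le[OF countable, of "error_region r" M]
    by (simp add: \<phi>_def M.emeasure_eq_measure)
  also have "\<dots> \<le> (SUP x\<in>{0<..2 * exp \<delta> * r}. ennreal (\<alpha>' x)) * ennreal (1 / \<bar>det B\<bar>)
                  * (\<integral>\<^sup>+u. ennreal (\<phi> u) \<partial>lborel)"
    using lattice_superlevel_count_le[OF det \<alpha>' \<delta> _ \<phi>_antimono \<phi>_vanish]
    by (intro nn_integral_count_space_le_superlevel[OF lborel.sigma_finite_measure_axioms countable])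
      (simp_all add: mult_ac)
  also have "(\<integral>\<^sup>+u. ennreal (\<phi> u) \<partial>lborel) = (\<integral>\<^sup>+u. emeasure M (error_region r u) \<partial>lborel)"
    by (simp add: \<phi>_def M.emeasure_eq_measure)
  also have "\<dots> = ennreal (measure lborel (ball (0::real^'n) 1))
                  * (\<integral>\<^sup>+z. ennreal (norm z ^ CARD('n)) * indicator {z. norm z < r} z \<partial>M)"
    using nn_integral_emeasure_error_region[where 'a="real^'n", of g r] by (simp add: M_def)
  finally show ?thesis
    by (simp add: mult.assoc)
qed

lemma emeasure_error_regions_eq_0:
  fixes L :: "'a::euclidean_space set" and g :: "real \<Rightarrow> real"
  defines "M \<equiv> radial_density g :: 'a measure"
  assumes "(\<integral>\<^sup>+z. ennreal (norm z ^ DIM('a)) * indicator {z. norm z < r} z \<partial>M) = 0"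
  shows "emeasure M (\<Union>l\<in>L - {0}. error_region r l) = 0"
proof -
  have "AE z in M. ennreal (norm z ^ DIM('a)) * indicator {z. norm z < r} z = 0"
    using assms(2) by (subst nn_integral_0_iff_AE[symmetric]) (simp_all add: M_def)
  then have "AE z in M. z \<notin> {z. z \<noteq> 0 \<and> norm z < r}"
    by (rule eventually_mono) (auto simp: indicator_def)
  then have "emeasure M {z. z \<noteq> 0 \<and> norm z < r} = 0"
    by (subst (asm) AE_iff_measurable) (auto simp: M_def)
  moreover have "(\<Union>l\<in>L - {0}. error_region r l) \<subseteq> {z. z \<noteq> 0 \<and> norm z < r}"
    by (auto simp: error_region_def)
  ultimately show ?thesis
    using emeasure_mono[of _ "{z. z \<noteq> 0 \<and> norm z < r}" M] by (simp add: M_def)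
qed

lemma nn_integral_norm_power_le_distributed:
  fixes M :: "'a::euclidean_space measure"
  assumes "distributed M lborel norm f"
  shows "(\<integral>\<^sup>+z. ennreal (norm z ^ k) * indicator {z. norm z < r} z \<partial>M)
           \<le> (\<integral>\<^sup>+\<rho>\<in>{0..r}. f \<rho> * ennreal (\<rho> ^ k) \<partial>lborel)"
proof -
  have "(\<integral>\<^sup>+z. ennreal (norm z ^ k) * indicator {z. norm z < r} z \<partial>M)
      = (\<integral>\<^sup>+z. ennreal (norm z ^ k * indicator {0..<r} (norm z)) \<partial>M)"
    by (intro nn_integral_cong) (simp add: indicator_def)
  also have "\<dots> = (\<integral>\<^sup>+\<rho>. f \<rho> * ennreal (\<rho> ^ k * indicator {0..<r} \<rho>) \<partial>lborel)"
    by (rule distributed_nn_integral[OF assms, symmetric]) measurable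
  also have "\<dots> \<le> (\<integral>\<^sup>+\<rho>\<in>{0..r}. f \<rho> * ennreal (\<rho> ^ k) \<partial>lborel)"
    by (intro nn_integral_mono) (auto simp: indicator_def)
  finally show ?thesis .
qed

lemma error_probability_le:
  fixes B :: "real^'n^'n" and g :: "real \<Rightarrow> real" and f :: "real \<Rightarrow> ennreal" and r :: real
  defines "M \<equiv> radial_density g :: (real^'n) measure"
  assumes det: "det B \<noteq> 0" and [measurable]: "g \<in> borel_measurable borel"
    and "prob_space M" and f: "distributed M lborel norm f" and r: "r > 0"
  shows "emeasure M (UNIV - voronoi0 (lattice_of B))
     \<le> alpha_fn (lattice_of B) (ln (1 / \<bar>det B\<bar>) / real CARD('n)) r * ennreal (1 / \<bar>det B\<bar>)
         * ennreal (measure lborel (ball (0::real^'n) 1))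
         * (\<integral>\<^sup>+\<rho>\<in>{0..r}. f \<rho> * ennreal (\<rho> ^ CARD('n)) \<partial>lborel)
       + (\<integral>\<^sup>+\<rho>\<in>{r..}. f \<rho> \<partial>lborel)"
proof -
  interpret M: prob_space M by fact
  define \<delta> where "\<delta> = ln (1 / \<bar>det B\<bar>) / real CARD('n)"
  define U where "U = (\<Union>l\<in>lattice_of B - {0}. error_region r l)"
  define k where "k = ennreal (1 / \<bar>det B\<bar>) * ennreal (measure lborel (ball (0::real^'n) 1))"
  define Y where "Y = (\<integral>\<^sup>+z. ennreal (norm z ^ CARD('n)) * indicator {z. norm z < r} z \<partial>M)"
  define I where "I = (\<integral>\<^sup>+\<rho>\<in>{0..r}. f \<rho> * ennreal (\<rho> ^ CARD('n)) \<partial>lborel)"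
  have U: "U \<in> sets M"
    using countable_lattice_of[OF det] by (simp add: U_def M_def sets.countable_UN'')
  have "Y \<le> (\<integral>\<^sup>+z. ennreal (r ^ CARD('n)) \<partial>M)"
    unfolding Y_def using r by (intro nn_integral_mono) (auto simp: indicator_def intro!: power_mono)
  then have "k * Y \<noteq> \<top>"
    by (auto simp: k_def ennreal_mult_eq_top_iff top_unique M.emeasure_space_1)
  moreover have "k * Y = 0 \<Longrightarrow> emeasure M U = 0"
    using det emeasure_error_regions_eq_0[of g r "lattice_of B"] by (simp add: k_def Y_def U_def M_def)
  ultimately have "emeasure M U \<le> alpha_fn (lattice_of B) \<delta> r * (k * Y)"
    unfolding alpha_fn_def using emeasure_error_regions_le[OF det _ _ _ \<delta>_def] assms(3,4)
    by (intro ennreal_le_INF_mult) (auto simp: U_def k_def Y_def M_def)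
  also have "\<dots> \<le> alpha_fn (lattice_of B) \<delta> r * (k * I)"
    using nn_integral_norm_power_le_distributed[OF f] by (auto simp: Y_def I_def intro!: mult_left_mono)
  finally have "emeasure M U \<le> alpha_fn (lattice_of B) \<delta> r * (k * I)" .
  moreover have "UNIV - voronoi0 (lattice_of B) \<subseteq> U \<union> {z. r \<le> norm z}"
    by (auto simp: voronoi0_def U_def error_region_def not_less)
  then have "emeasure M (UNIV - voronoi0 (lattice_of B)) \<le> emeasure M U + emeasure M {z. r \<le> norm z}"
    using U by (intro order_trans[OF emeasure_mono emeasure_subadditive]) (auto simp: M_def)
  moreover have "emeasure M {z. r \<le> norm z} = (\<integral>\<^sup>+\<rho>\<in>{r..}. f \<rho> \<partial>lborel)"
    using distributed_emeasure[OF f, of "{r..}"] by (simp add: M_def vimage_def)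
  ultimately show ?thesis
    by (simp add: \<delta>_def k_def I_def mult.assoc order_trans add_right_mono)
qed

theorem theorem5:
  fixes B :: "real^'n^'n" and g :: "real \<Rightarrow> real" and f :: "real \<Rightarrow> ennreal"
    and M :: "(real^'n) measure" and r :: real
  assumes "det B \<noteq> 0"
    and "\<forall>\<rho>\<ge>0. 0 \<le> g \<rho>"
    and "\<forall>a b. 0 \<le> a \<longrightarrow> a \<le> b \<longrightarrow> g b \<le> g a"
    and "g \<in> borel_measurable borel"
    and "M = density lborel (\<lambda>z. ennreal (g (norm z)))"
    and "prob_space M"
    and "distributed M lborel norm f"
    and "r > 0"
  defines "\<Lambda>0 \<equiv> lattice_of B"
    and "\<beta> \<equiv> 1 / \<bar>det B\<bar>"
    and "\<delta> \<equiv> ln (1 / \<bar>det B\<bar>) / real CARD('n)"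
    and "Vn \<equiv> measure lborel (ball (0::real^'n) 1)"
  shows "(emeasure M (UNIV - voronoi0 \<Lambda>0)
           \<le> alpha_fn \<Lambda>0 \<delta> r * ennreal \<beta> * ennreal Vn
               * (\<integral>\<^sup>+ \<rho>\<in>{0..r}. f \<rho> * ennreal (\<rho> ^ CARD('n)) \<partial>lborel)
             + (\<integral>\<^sup>+ \<rho>\<in>{r..}. f \<rho> \<partial>lborel))
         \<and> emeasure M (UNIV - voronoi0 \<Lambda>0)
           \<le> (INF s\<in>{0<..}. alpha_fn \<Lambda>0 \<delta> s * ennreal \<beta> * ennreal Vn
               * (\<integral>\<^sup>+ \<rho>\<in>{0..s}. f \<rho> * ennreal (\<rho> ^ CARD('n)) \<partial>lborel)
             + (\<integral>\<^sup>+ \<rho>\<in>{s..}. f \<rho> \<partial>lborel))"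
proof -
  have M: "M = radial_density g"
    using assms(5) by (simp add: radial_density_def)
  have bound: "emeasure M (UNIV - voronoi0 \<Lambda>0)
           \<le> alpha_fn \<Lambda>0 \<delta> s * ennreal \<beta> * ennreal Vn
               * (\<integral>\<^sup>+ \<rho>\<in>{0..s}. f \<rho> * ennreal (\<rho> ^ CARD('n)) \<partial>lborel)
             + (\<integral>\<^sup>+ \<rho>\<in>{s..}. f \<rho> \<partial>lborel)" if "s > 0" for s
    using error_probability_le[OF assms(1,4) _ _ that, of f] assms(6,7)
    unfolding M \<Lambda>0_def \<beta>_def \<delta>_def Vn_def by simp
  show ?thesis
    using bound[OF assms(8)] by (auto intro: INF_greatest bound)
qed

end
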